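(* Let $m\ge2$, let $\mathbf A$ be the $(m-1)\times(m-1)$ tridiagonal matrix with $2$ on the diagonal and $-1$ on the sub- and super-diagonals, and let $\mathbf v=\mathbf A^{-1}\mathbf 1$. Then $v_j=\frac12 j(m-j)$ for $j=1,\dots,m-1$, and the eigenvalue problem $$ \Omega^2\xi_j+v_{j+1}\xi_{j+1}-2v_j\xi_j+v_{j-1}\xi_{j-1}=0,\quad j=1,\dots,m-1, $$ (with $v_0=v_m=0$), i.e. the eigenvalue problem for the matrix $\mathbf A\,\mathrm{diag}(\mathbf v)$, has exactly the $m-1$ simple eigenvalues $\Omega^2\in\{n(n+1)/2:\ n=1,\dots,m-1\}=\{1,3,6,\dots,m(m-1)/2\}$.
   Context: $\mathbf 1=(1,\dots,1)^T\in\mathbb R^{m-1}$. *)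

theory Defs
  imports "Jordan_Normal_Form.Gauss_Jordan_Elimination" "Jordan_Normal_Form.Char_Poly"
begin

(* (m-1)x(m-1) tridiagonal matrix with 2 on the diagonal, -1 on the off-diagonals;
   index i (0-based) corresponds to the paper's index i+1 *)
definition tridiag :: "nat \<Rightarrow> real mat" where
  "tridiag n = mat n n (\<lambda>(i,j). if i = j then 2 else if i = j + 1 \<or> j = i + 1 then -1 else 0)"

end

theory Submission
  imports Defs
begin

(* Let L act on real functions by (L f)(x) = 2 (v f)(x) - (v f)(x+1) - (v f)(x-1) with the
   parabola v(x) = x (m - x)/2. Since v vanishes at 0 and m, the matrix A diag(v) is L restricted
   to the values at the nodes 1, ..., m-1. As v is quadratic, L maps x^d to a polynomial of degree
   d with leading coefficient (d+1)(d+2)/2. The values of 1, x, ..., x^(m-2) at the nodes form an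
   invertible Vandermonde matrix, so A diag(v) is similar to an upper triangular matrix with the
   distinct diagonal entries (d+1)(d+2)/2, d = 0, ..., m-2. *)

lemma tridiag_carrier_mat [simp]: "tridiag n \<in> carrier_mat n n"
  by (simp add: tridiag_def)

lemma dim_tridiag [simp]: "dim_row (tridiag n) = n" "dim_col (tridiag n) = n"
  by (simp_all add: tridiag_def)

(* The entries w_1, ..., w_n of the paper together with the boundary values w_0 = w_(n+1) = 0. *)
definition pad :: "real vec \<Rightarrow> nat \<Rightarrow> real" where
  "pad w j = (if 1 \<le> j \<and> j \<le> dim_vec w then w $ (j - 1) else 0)"

lemma tridiag_mult_vec_nth:
  assumes w: "w \<in> carrier_vec n" and i: "i < n"
  shows "(tridiag n *\<^sub>v w) $ i = 2 * pad w (i + 1) - pad w i - pad w (i + 2)"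
proof -
  have "(tridiag n *\<^sub>v w) $ i = (\<Sum>k\<in>{0..<n}. tridiag n $$ (i, k) * w $ k)"
    using w i by (simp add: tridiag_def scalar_prod_def)
  also have "\<dots> = (\<Sum>k\<in>{0..<n}. (if k = i then 2 * w $ k else 0)
      + (if k + 1 = i then - w $ k else 0) + (if k = i + 1 then - w $ k else 0))"
    using i by (intro sum.cong refl) (auto simp: tridiag_def)
  also have "\<dots> = 2 * pad w (i + 1) - pad w i - pad w (i + 2)"
  proof (cases i)
    case 0
    then show ?thesis using i w by (simp add: sum.distrib pad_def)
  next
    case (Suc j)
    have "(\<Sum>k\<in>{0..<n}. (if k + 1 = i then - w $ k else 0))
        = (\<Sum>k\<in>{0..<n}. (if k = j then - w $ k else 0))"
      using Suc by (intro sum.cong) auto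
    then show ?thesis using i w Suc by (simp add: sum.distrib pad_def)
  qed
  finally show ?thesis .
qed

lemma mat_inverse_if_trivial_kernel:
  fixes M :: "'a :: field mat"
  assumes M: "M \<in> carrier_mat n n"
    and ker: "\<And>w. w \<in> carrier_vec n \<Longrightarrow> M *\<^sub>v w = 0\<^sub>v n \<Longrightarrow> w = 0\<^sub>v n"
  obtains M' where "mat_inverse M = Some M'" "M * M' = 1\<^sub>m n" "M' * M = 1\<^sub>m n"
    "M' \<in> carrier_mat n n"
proof -
  have "det M \<noteq> 0"
    using det_0_iff_vec_prod_zero_field[OF M] ker by blast
  then have "mat_inverse M \<noteq> None"
    using det_non_zero_imp_unit[OF M, of "()"] mat_inverse(1)[OF M, of "()"] by blast
  then obtain M' where "mat_inverse M = Some M'" by auto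
  with mat_inverse(2)[OF M this] that show ?thesis by blast
qed

lemma zero_second_difference_imp_linear:
  fixes W :: "nat \<Rightarrow> real"
  assumes rec: "\<And>i. i < n \<Longrightarrow> W (i + 2) = 2 * W (i + 1) - W i" and "W 0 = 0"
    and "j \<le> Suc n"
  shows "W j = real j * W 1"
proof -
  have "W j = real j * W 1 \<and> W (Suc j) = real (Suc j) * W 1" if "j \<le> n" for j
    using that
  proof (induction j)
    case 0
    then show ?case using \<open>W 0 = 0\<close> by simp
  next
    case (Suc j)
    then have "W (Suc (Suc j)) = 2 * W (Suc j) - W j"
      using rec[of j] by simp
    with Suc show ?case by (simp add: algebra_simps)
  qed
  then show ?thesis
    using \<open>j \<le> Suc n\<close> le_Suc_eq by blast
qed

lemma tridiag_trivial_kernel: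
  assumes w: "w \<in> carrier_vec n" and ker: "tridiag n *\<^sub>v w = 0\<^sub>v n"
  shows "w = 0\<^sub>v n"
proof -
  have rec: "pad w (i + 2) = 2 * pad w (i + 1) - pad w i" if "i < n" for i
    using tridiag_mult_vec_nth[OF w that] ker that by simp
  have lin: "pad w j = real j * pad w 1" if "j \<le> Suc n" for j
    using zero_second_difference_imp_linear[OF rec _ that] w by (simp add: pad_def)
  have "pad w 1 = 0"
    using lin[of "Suc n"] w by (simp add: pad_def)
  show ?thesis
  proof (rule eq_vecI)
    fix i assume "i < dim_vec (0\<^sub>v n)"
    then have "w $ i = pad w (Suc i)" using w by (simp add: pad_def)
    with lin[of "Suc i"] \<open>pad w 1 = 0\<close> \<open>i < dim_vec (0\<^sub>v n)\<close>
    show "w $ i = 0\<^sub>v n $ i" by simp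
  qed (use w in simp)
qed

lemma invertible_tridiag: "invertible_mat (tridiag n)"
proof -
  obtain M' where "tridiag n * M' = 1\<^sub>m n" "M' * tridiag n = 1\<^sub>m n" "M' \<in> carrier_mat n n"
    using mat_inverse_if_trivial_kernel[OF tridiag_carrier_mat tridiag_trivial_kernel] by blast
  then show ?thesis
    unfolding invertible_mat_def inverts_mat_def by (auto intro!: exI[of _ M'])
qed

definition parabola :: "nat \<Rightarrow> real \<Rightarrow> real" where
  "parabola m x = x * (real m - x) / 2"

definition parabola_vec :: "nat \<Rightarrow> real vec" where
  "parabola_vec n = vec n (\<lambda>i. parabola (Suc n) (real (i + 1)))"

lemma pad_parabola_vec: "j \<le> Suc n \<Longrightarrow> pad (parabola_vec n) j = parabola (Suc n) (real j)"
  by (auto simp: pad_def parabola_vec_def parabola_def of_nat_diff)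

lemma tridiag_mult_parabola_vec: "tridiag n *\<^sub>v parabola_vec n = vec n (\<lambda>_. 1)"
proof (rule eq_vecI)
  fix i assume "i < dim_vec (vec n (\<lambda>_. 1::real))"
  then have i: "i < n" by simp
  have p: "parabola_vec n \<in> carrier_vec n" by (simp add: parabola_vec_def)
  have "2 * parabola (Suc n) (real i + 1) - parabola (Suc n) (real i)
      - parabola (Suc n) (real i + 2) = 1"
    by (simp add: parabola_def algebra_simps divide_simps)
  then show "(tridiag n *\<^sub>v parabola_vec n) $ i = vec n (\<lambda>_. 1) $ i"
    unfolding tridiag_mult_vec_nth[OF p i]
    using i by (simp add: pad_parabola_vec add_ac)
qed simp

lemma tridiag_inverse_ones:
  "the (mat_inverse (tridiag n)) *\<^sub>v vec n (\<lambda>_. 1) = parabola_vec n"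
proof -
  obtain M' where M': "mat_inverse (tridiag n) = Some M'" "M' * tridiag n = 1\<^sub>m n"
    "M' \<in> carrier_mat n n"
    using mat_inverse_if_trivial_kernel[OF tridiag_carrier_mat tridiag_trivial_kernel] by blast
  have p: "parabola_vec n \<in> carrier_vec n" by (simp add: parabola_vec_def)
  have "M' *\<^sub>v (tridiag n *\<^sub>v parabola_vec n) = (M' * tridiag n) *\<^sub>v parabola_vec n"
    by (rule assoc_mult_mat_vec[symmetric, OF M'(3) tridiag_carrier_mat p])
  also have "\<dots> = parabola_vec n"
    using M'(2) p by simp
  finally have "M' *\<^sub>v (tridiag n *\<^sub>v parabola_vec n) = parabola_vec n" .
  then show ?thesis
    using M'(1) by (simp add: tridiag_mult_parabola_vec)
qed

definition monomial_mat :: "nat \<Rightarrow> real mat" where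
  "monomial_mat n = mat n n (\<lambda>(i, d). real (Suc i) ^ d)"

lemma monomial_mat_carrier_mat [simp]: "monomial_mat n \<in> carrier_mat n n"
  by (simp add: monomial_mat_def)

lemma monomial_mat_trivial_kernel:
  assumes c: "c \<in> carrier_vec n" and ker: "monomial_mat n *\<^sub>v c = 0\<^sub>v n"
  shows "c = 0\<^sub>v n"
proof -
  define p where "p = (\<Sum>d<n. monom (c $ d) d)"
  have coeff_p: "coeff p k = (if k < n then c $ k else 0)" for k
    by (simp add: p_def coeff_sum)
  have roots: "poly p (real (Suc i)) = 0" if "i < n" for i
  proof -
    have "(monomial_mat n *\<^sub>v c) $ i = 0" using ker that by simp
    then show ?thesis
      using that c by (simp add: monomial_mat_def p_def poly_sum poly_monom scalar_prod_def
          lessThan_atLeast0 mult.commute)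
  qed
  have "p = 0"
  proof (rule ccontr)
    assume "p \<noteq> 0"
    have "n = card ((\<lambda>i. real (Suc i)) ` {..<n})"
      by (subst card_image) (auto simp: inj_on_def)
    also have "\<dots> \<le> card {x. poly p x = 0}"
      using roots by (intro card_mono poly_roots_finite[OF \<open>p \<noteq> 0\<close>]) auto
    also have "\<dots> \<le> degree p"
      by (rule card_poly_roots_bound[OF \<open>p \<noteq> 0\<close>])
    finally have "n \<le> degree p" .
    then have "coeff p (degree p) = 0" by (simp add: coeff_p)
    with \<open>p \<noteq> 0\<close> show False by simp
  qed
  then have "c $ i = 0" if "i < n" for i
    using coeff_p[of i] that by simp
  then show ?thesis
    using c by (intro eq_vecI) auto
qed

lemma second_difference_power:
  fixes x :: real
  shows "(x + 1) ^ k + (x - 1) ^ k - 2 * x ^ k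
    = (\<Sum>e<k. of_nat (k choose e) * (1 + (-1) ^ (k - e)) * x ^ e)"
proof -
  have plus: "(x + 1) ^ k = (\<Sum>e\<le>k. of_nat (k choose e) * x ^ e)"
    using binomial_ring[of x 1 k] by simp
  have minus: "(x - 1) ^ k = (\<Sum>e\<le>k. of_nat (k choose e) * x ^ e * (-1) ^ (k - e))"
    using binomial_ring[of x "-1" k] by simp
  have "(x + 1) ^ k + (x - 1) ^ k
      = (\<Sum>e\<le>k. of_nat (k choose e) * (1 + (-1) ^ (k - e)) * x ^ e)"
    unfolding plus minus sum.distrib[symmetric] by (intro sum.cong refl) (simp add: algebra_simps)
  also have "\<dots> = (\<Sum>e<k. of_nat (k choose e) * (1 + (-1) ^ (k - e)) * x ^ e) + 2 * x ^ k"
    by (simp add: lessThan_Suc_atMost[symmetric])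
  finally show ?thesis by simp
qed

(* The coefficient of x^e in L(x^d), read off from second_difference_power applied to
   v(x) x^d = (m x^(d+1) - x^(d+2))/2. *)
definition diff_op_coeff :: "nat \<Rightarrow> nat \<Rightarrow> nat \<Rightarrow> real" where
  "diff_op_coeff m e d =
    (if e \<le> d then (of_nat (Suc (Suc d) choose e) * (1 + (-1) ^ (Suc (Suc d) - e))
       - real m * of_nat (Suc d choose e) * (1 + (-1) ^ (Suc d - e))) / 2 else 0)"

lemma diff_op_coeff_expansion:
  fixes x :: real
  assumes "d < n"
  shows "(\<Sum>e<n. x ^ e * diff_op_coeff m e d)
    = 2 * parabola m x * x ^ d - parabola m (x + 1) * (x + 1) ^ d
      - parabola m (x - 1) * (x - 1) ^ d"
proof -
  have "{..<n} = {..d} \<union> {Suc d..<n}" "{..d} \<inter> {Suc d..<n} = {}"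
    using assms by auto
  then have lhs: "(\<Sum>e<n. x ^ e * diff_op_coeff m e d) = (\<Sum>e\<le>d. x ^ e * diff_op_coeff m e d)"
    by (simp add: sum.union_disjoint diff_op_coeff_def)
  have v: "parabola m y * y ^ d = (real m * y ^ Suc d - y ^ Suc (Suc d)) / 2" for y
    by (simp add: parabola_def algebra_simps divide_simps)
  have rhs: "2 * parabola m x * x ^ d - parabola m (x + 1) * (x + 1) ^ d
      - parabola m (x - 1) * (x - 1) ^ d
    = (((x + 1) ^ Suc (Suc d) + (x - 1) ^ Suc (Suc d) - 2 * x ^ Suc (Suc d))
       - real m * ((x + 1) ^ Suc d + (x - 1) ^ Suc d - 2 * x ^ Suc d)) / 2"
    unfolding mult.assoc v by (simp add: algebra_simps diff_divide_distrib add_divide_distrib)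
  show ?thesis
    unfolding lhs rhs second_difference_power lessThan_Suc_atMost
    by (simp add: diff_op_coeff_def sum_divide_distrib sum_distrib_left
        sum_subtractf[symmetric] algebra_simps)
qed

lemma diff_op_coeff_diag: "diff_op_coeff m d d = real ((d + 1) * (d + 2)) / 2"
proof -
  have "2 * (Suc (Suc d) choose d) = (d + 1) * (d + 2)"
    by (induction d) (auto simp: algebra_simps)
  then have "real (Suc (Suc d) choose d) = real ((d + 1) * (d + 2)) / 2"
    by (metis nonzero_mult_div_cancel_left of_nat_mult of_nat_numeral zero_neq_numeral)
  then show ?thesis by (simp add: diff_op_coeff_def)
qed

definition diff_op_mat :: "nat \<Rightarrow> nat \<Rightarrow> real mat" where
  "diff_op_mat m n = mat n n (\<lambda>(e, d). diff_op_coeff m e d)"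

lemma diff_op_mat_carrier_mat [simp]: "diff_op_mat m n \<in> carrier_mat n n"
  by (simp add: diff_op_mat_def)

lemma upper_triangular_diff_op_mat: "upper_triangular (diff_op_mat m n)"
  by (simp add: upper_triangular_def diff_op_mat_def diff_op_coeff_def)

lemma diag_diff_op_mat:
  "diag_mat (diff_op_mat m n) = map (\<lambda>d. real ((d + 1) * (d + 2)) / 2) [0..<n]"
  by (simp add: diag_mat_def diff_op_mat_def diff_op_coeff_diag)

lemma distinct_diag_diff_op_mat: "distinct (diag_mat (diff_op_mat m n))"
proof -
  have "strict_mono (\<lambda>d::nat. real ((d + 1) * (d + 2)) / 2)"
    unfolding strict_mono_Suc_iff
  proof
    fix d :: nat
    have "(d + 1) * (d + 2) < (Suc d + 1) * (Suc d + 2)"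
      by (intro mult_strict_mono) auto
    then have "real ((d + 1) * (d + 2)) < real ((Suc d + 1) * (Suc d + 2))"
      by (simp only: of_nat_less_iff)
    then show "real ((d + 1) * (d + 2)) / 2 < real ((Suc d + 1) * (Suc d + 2)) / 2"
      by simp
  qed
  then have "inj (\<lambda>d::nat. real ((d + 1) * (d + 2)) / 2)"
    by (rule strict_mono_on_imp_inj_on)
  then show ?thesis
    unfolding diag_diff_op_mat distinct_map
    using inj_on_subset[OF _ subset_UNIV, of _ "set [0..<n]"] by simp
qed

lemma set_diag_diff_op_mat:
  "set (diag_mat (diff_op_mat m n)) = {real (k * (k + 1)) / 2 | k. 1 \<le> k \<and> k \<le> n}"
proof (intro Set.set_eqI iffI)
  fix x assume "x \<in> set (diag_mat (diff_op_mat m n))"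
  then obtain d where "d < n" "x = real ((d + 1) * (d + 2)) / 2"
    by (auto simp: diag_diff_op_mat)
  then show "x \<in> {real (k * (k + 1)) / 2 | k. 1 \<le> k \<and> k \<le> n}"
    by (intro CollectI exI[of _ "Suc d"]) (simp add: algebra_simps)
next
  fix x assume "x \<in> {real (k * (k + 1)) / 2 | k. 1 \<le> k \<and> k \<le> n}"
  then obtain k where "1 \<le> k" "k \<le> n" "x = real (k * (k + 1)) / 2" by auto
  then have "k - 1 \<in> {0..<n}" "x = real ((k - 1 + 1) * (k - 1 + 2)) / 2"
    by (simp_all add: Suc_diff_1 numeral_2_eq_2)
  then show "x \<in> set (diag_mat (diff_op_mat m n))"
    unfolding diag_diff_op_mat by (simp only: set_map set_upt) blast
qed

lemma tridiag_parabola_monomial_mat: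
  "tridiag n * mat_diag n (\<lambda>j. parabola_vec n $ j) * monomial_mat n
    = monomial_mat n * diff_op_mat (Suc n) n"
proof -
  define Q where "Q = mat n n (\<lambda>(i, d). parabola (Suc n) (real (Suc i)) * real (Suc i) ^ d)"
  have "mat_diag n (\<lambda>j. parabola_vec n $ j) * monomial_mat n = Q"
    unfolding mat_diag_mult_left[OF monomial_mat_carrier_mat]
    by (rule eq_matI) (simp_all add: Q_def monomial_mat_def parabola_vec_def)
  then have "tridiag n * mat_diag n (\<lambda>j. parabola_vec n $ j) * monomial_mat n = tridiag n * Q"
    by (simp add: assoc_mult_mat[of _ n n _ n _ n])
  also have "\<dots> = monomial_mat n * diff_op_mat (Suc n) n"
  proof (rule eq_matI)
    fix i d assume "i < dim_row (monomial_mat n * diff_op_mat (Suc n) n)"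
      "d < dim_col (monomial_mat n * diff_op_mat (Suc n) n)"
    then have i: "i < n" and d: "d < n" by (simp_all add: monomial_mat_def diff_op_mat_def)
    have col: "col Q d \<in> carrier_vec n" unfolding carrier_vec_def by (simp add: Q_def)
    have pad_col: "pad (col Q d) j = parabola (Suc n) (real j) * real j ^ d" if "j \<le> Suc n" for j
    proof (cases "1 \<le> j \<and> j \<le> n")
      case True
      then have "Suc (j - 1) = j" by simp
      with True d show ?thesis by (simp add: pad_def Q_def)
    next
      case False
      with that have "j = 0 \<or> j = Suc n" by auto
      then show ?thesis by (auto simp: pad_def Q_def parabola_def)
    qed
    have "(tridiag n * Q) $$ (i, d) = (tridiag n *\<^sub>v col Q d) $ i"
      using i d by (simp add: Q_def)
    also have "\<dots> = 2 * parabola (Suc n) (real (Suc i)) * real (Suc i) ^ d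
        - parabola (Suc n) (real (Suc i) + 1) * (real (Suc i) + 1) ^ d
        - parabola (Suc n) (real (Suc i) - 1) * (real (Suc i) - 1) ^ d"
      using i by (simp add: tridiag_mult_vec_nth[OF col i] pad_col add_ac)
    also have "\<dots> = (\<Sum>e<n. real (Suc i) ^ e * diff_op_coeff (Suc n) e d)"
      by (rule diff_op_coeff_expansion[OF d, symmetric])
    also have "\<dots> = (monomial_mat n * diff_op_mat (Suc n) n) $$ (i, d)"
      using i d by (simp add: monomial_mat_def diff_op_mat_def scalar_prod_def lessThan_atLeast0)
    finally show "(tridiag n * Q) $$ (i, d) = (monomial_mat n * diff_op_mat (Suc n) n) $$ (i, d)" .
  qed (auto simp: Q_def monomial_mat_def diff_op_mat_def)
  finally show ?thesis .
qed

lemma similar_mat_tridiag_parabola: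
  "similar_mat (tridiag n * mat_diag n (\<lambda>j. parabola_vec n $ j)) (diff_op_mat (Suc n) n)"
proof -
  define B where "B = tridiag n * mat_diag n (\<lambda>j. parabola_vec n $ j)"
  have B: "B \<in> carrier_mat n n"
    unfolding B_def by (rule mult_carrier_mat[OF tridiag_carrier_mat mat_diag_dim])
  obtain P' where P': "monomial_mat n * P' = 1\<^sub>m n" "P' * monomial_mat n = 1\<^sub>m n"
    "P' \<in> carrier_mat n n"
    using mat_inverse_if_trivial_kernel[OF monomial_mat_carrier_mat monomial_mat_trivial_kernel]
    by blast
  have "B = B * monomial_mat n * P'"
    using B P' by (simp add: assoc_mult_mat[of _ n n _ n _ n])
  also have "\<dots> = monomial_mat n * diff_op_mat (Suc n) n * P'"
    unfolding B_def tridiag_parabola_monomial_mat ..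
  finally show ?thesis
    unfolding B_def[symmetric] using B P' by (intro similar_matI) auto
qed

lemma order_prod_linear_factors:
  fixes x :: "'a :: idom"
  shows "order x (\<Prod>a\<leftarrow>as. [:- a, 1:]) = count_list as x"
proof (induction as)
  case Nil
  then show ?case by (simp add: order_0I)
next
  case (Cons a as)
  have "(\<Prod>a\<leftarrow>as. [:- a, 1:]) \<noteq> 0"
    by (auto simp: prod_list_zero_iff)
  then have "[:- a, 1:] * (\<Prod>a\<leftarrow>as. [:- a, 1:]) \<noteq> 0"
    by (intro no_zero_divisors) simp_all
  then have "order x ([:- a, 1:] * (\<Prod>a\<leftarrow>as. [:- a, 1:]))
      = order x [:- a, 1:] + order x (\<Prod>a\<leftarrow>as. [:- a, 1:])"
    by (rule order_mult)
  then show ?case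
    using Cons by (simp add: order_linear')
qed

lemma count_list_distinct_mem: "distinct xs \<Longrightarrow> x \<in> set xs \<Longrightarrow> count_list xs x = 1"
  by (induction xs) auto

lemma eigenvalue_similar_upper_triangular:
  fixes B U :: "'a :: field mat"
  assumes "similar_mat B U" "U \<in> carrier_mat n n" "upper_triangular U"
  shows "eigenvalue B x \<longleftrightarrow> x \<in> set (diag_mat U)"
    and "distinct (diag_mat U) \<Longrightarrow> eigenvalue B x \<Longrightarrow> order x (char_poly B) = 1"
proof -
  have cp: "char_poly B = (\<Prod>a\<leftarrow>diag_mat U. [:- a, 1:])"
    using char_poly_similar[OF assms(1)] char_poly_upper_triangular[OF assms(2,3)] by simp
  have B: "B \<in> carrier_mat n n"
    using similar_matD[OF assms(1)] assms(2) by auto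
  show eig: "eigenvalue B x \<longleftrightarrow> x \<in> set (diag_mat U)"
    unfolding eigenvalue_root_char_poly[OF B] cp poly_prod_list_zero_iff by auto
  assume "distinct (diag_mat U)" "eigenvalue B x"
  then have "count_list (diag_mat U) x = 1"
    using eig by (intro count_list_distinct_mem) simp_all
  then show "order x (char_poly B) = 1"
    by (simp only: cp order_prod_linear_factors)
qed

theorem mainTheorem7:
  fixes m :: nat
  assumes "m \<ge> 2"
  defines "A \<equiv> tridiag (m - 1)"
  defines "v \<equiv> the (mat_inverse A) *\<^sub>v vec (m - 1) (\<lambda>_. 1)"
  defines "B \<equiv> A * mat_diag (m - 1) (\<lambda>j. v $ j)"
  shows "invertible_mat A
    \<and> dim_vec v = m - 1
    \<and> (\<forall>j < m - 1. v $ j = real (j + 1) * (real m - real (j + 1)) / 2)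
    \<and> {\<Omega>. eigenvalue B \<Omega>} = {real (k * (k + 1)) / 2 | k. 1 \<le> k \<and> k \<le> m - 1}
    \<and> (\<forall>\<Omega>. eigenvalue B \<Omega> \<longrightarrow> order \<Omega> (char_poly B) = 1)"
proof -
  obtain n where m: "m = Suc n" using assms(1) by (cases m) auto
  have v: "v = parabola_vec n"
    unfolding v_def A_def m by (simp add: tridiag_inverse_ones)
  let ?U = "diff_op_mat m n"
  have sim: "similar_mat B ?U"
    unfolding B_def A_def v m using similar_mat_tridiag_parabola by simp
  have U: "?U \<in> carrier_mat n n" "upper_triangular ?U"
    by (simp_all only: diff_op_mat_carrier_mat upper_triangular_diff_op_mat)
  show ?thesis
    using eigenvalue_similar_upper_triangular[OF sim U] distinct_diag_diff_op_mat invertible_tridiag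
    by (simp add: A_def v m parabola_vec_def parabola_def set_diag_diff_op_mat)
qed

end
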